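(* Let $\lambda$ be a partition and $\sigma$ a sorted tableau of $\mathrm{dg}(\lambda)$. Then $\mathrm{maj}(\tau)=\mathrm{maj}(\sigma)$ for every $\tau\in\mathcal{F}(\sigma)$.
   Context: Diagrams and fillings: for a partition $\lambda=(\lambda_1\ge\dots\ge\lambda_n>0)$, $\mathrm{dg}(\lambda)$ is the set of cells $(i,r)$, $1\le i\le n$, $1\le r\le\lambda_i$ (columns from the left, rows from the bottom). A filling is $\sigma:\mathrm{dg}(\lambda)\to\mathbb{Z}_{>0}$; a basement row $0$ with all entries $\infty$ is adjoined. $\mathrm{leg}(i,r)=\lambda_i-r$. Triples: for $u<v$, $r\ge1$, $(v,r),(u,r)\in\mathrm{dg}(\lambda)$, cells $(v,r),(u,r),(u,r-1)$; with $a=\sigma(v,r),b=\sigma(u,r),c=\sigma(u,r-1)$ counterclockwise (inversion) if $a<b\le c$ or $c<a<b$ or $b\le c<a$, clockwise otherwise. Descent: $(u,r)$, $r\ge2$, with $\sigma(u,r)>\sigma(u,r-1)$; $\mathrm{maj}(\sigma)=\sum_{\text{descents}}(\mathrm{leg}+1)$. Sorted tableau: for non-identical columns $A$ left of $B$ of equal height with entries $a_k,b_k$ bottom to top and $r$ least with $a_r\ne b_r$: $A\lhd B$ if $r=1$ and $a_1<b_1$, or $r\ge2$ and the cells of $b_r,a_r,a_{r-1}$ do not form a counterclockwise triple; $\sigma$ is sorted if any two columns of equal height, $A$ left of $B$, are identical or satisfy $A\lhd B$. Operator $\mathcal{T}_i^{(r)}$ (defined when columns $i,i+1$ agree in rows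 $<r$ and differ in row $r$): swap entries of $(i,r),(i+1,r)$; then repeatedly, if cells $(i+1,r+1),(i,r+1)$ exist and the triple $(i+1,r+1),(i,r+1),(i,r)$ changed orientation (clockwise/counterclockwise) under the last swap, swap entries of $(i,r+1),(i+1,r+1)$ and increase $r$ by one; otherwise stop. PDS: let $\mathbf{w_0}=(s_1)(s_2s_1)\cdots(s_{n-1}\cdots s_2s_1)=s_{j_N}\cdots s_{j_1}$ ($N=\binom n2$). For $v\in S_n$ set $v_{(0)}=v$ and for $k=1,\dots,N$: $v_{(k)}=v_{(k-1)}s_{j_k}$ if $\ell(v_{(k-1)}s_{j_k})<\ell(v_{(k-1)})$, else $v_{(k)}=v_{(k-1)}$. The PDS of $v$ is the product, in the same left-to-right order, of those $s_{j_k}$ at which the multiplication was performed; writing it $s_{i_p}\cdots s_{i_1}$, set $\mathcal{T}_v^{(r)}=\mathcal{T}_{i_p}^{(r)}\circ\cdots\circ\mathcal{T}_{i_1}^{(r)}$. Blocks: in a filling of a rectangle, a block in row $r$ is a maximal set of consecutive columns $i,\dots,j$ that agree in every row $s<r$. For row $r$ of $\sigma$ with entries $b=(b_1,\dots,b_n)$ and blocks $B^{(1)},\dots,B^{(\ell)}$, let $W_r(\sigma)$ be the set of distinct words obtained by permuting entries of $b$ only within blocks; for $w\in W_r(\sigma)$ let $\tilde w\in S_n$ be the shortest permutation with $(b_{\tilde w^{-1}(1)},\dots,b_{\tilde w^{-1}(n)})=w$. Family: if $\sigma$ is a sorted tableau of an $m\times n$ rectangle, set $\mathcal F^{(m)}=\{\sigma\}$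 and for $r=m,m-1,\dots,1$ set $\mathcal F^{(r-1)}=\{\mathcal{T}^{(r)}_{\tilde w}(\tau):\tau\in\mathcal F^{(r)},\,w\in W_r(\sigma)\}$; $\mathcal F(\sigma)=\mathcal F^{(0)}$. For general $\lambda$, $\sigma$ is the left-to-right concatenation of sorted tableaux $\sigma_1,\dots,\sigma_k$ of the maximal rectangles of equal-height columns, and $\mathcal F(\sigma)$ is the set of concatenations $\tau_1\cdots\tau_k$ with $\tau_j\in\mathcal F(\sigma_j)$. *)

theory Defs
  imports "HOL-Library.Extended_Nat" "HOL-Combinatorics.Permutations"
begin

text \<open>Cells are pairs (i,r): column i (1-based, from the left), row r (from the bottom).
A filling is a function on cells; only its values on the diagram matter.\<close>

type_synonym filling = "nat \<times> nat \<Rightarrow> nat"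

definition partition :: "nat list \<Rightarrow> bool" where
  "partition lam \<longleftrightarrow> sorted_wrt (\<ge>) lam \<and> (\<forall>x\<in>set lam. x > 0)"

definition colh :: "nat list \<Rightarrow> nat \<Rightarrow> nat" where
  "colh lam i = lam ! (i - 1)"

definition dg :: "nat list \<Rightarrow> (nat \<times> nat) set" where
  "dg lam = {(i, r). 1 \<le> i \<and> i \<le> length lam \<and> 1 \<le> r \<and> r \<le> colh lam i}"

definition is_filling :: "nat list \<Rightarrow> filling \<Rightarrow> bool" where
  "is_filling lam \<sigma> \<longleftrightarrow> (\<forall>c\<in>dg lam. \<sigma> c > 0)"

definition ent :: "filling \<Rightarrow> nat \<times> nat \<Rightarrow> enat" where
  "ent \<sigma> c = (if snd c = 0 then \<infinity> else enat (\<sigma> c))"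

definition leg :: "nat list \<Rightarrow> nat \<times> nat \<Rightarrow> nat" where
  "leg lam c = colh lam (fst c) - snd c"

text \<open>Counterclockwise orientation of values a = sigma(v,r), b = sigma(u,r), c = sigma(u,r-1).\<close>
definition ccw :: "enat \<Rightarrow> enat \<Rightarrow> enat \<Rightarrow> bool" where
  "ccw a b c \<longleftrightarrow> (a < b \<and> b \<le> c) \<or> (c < a \<and> a < b) \<or> (b \<le> c \<and> c < a)"

definition ccw_triple :: "filling \<Rightarrow> nat \<Rightarrow> nat \<Rightarrow> nat \<Rightarrow> bool" where
  "ccw_triple \<sigma> v u r \<longleftrightarrow> ccw (ent \<sigma> (v, r)) (ent \<sigma> (u, r)) (ent \<sigma> (u, r - 1))"

definition maj :: "nat list \<Rightarrow> filling \<Rightarrow> nat" where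
  "maj lam \<sigma> = (\<Sum>c\<in>{c \<in> dg lam. 2 \<le> snd c \<and> \<sigma> c > \<sigma> (fst c, snd c - 1)}. leg lam c + 1)"

definition col_lhd :: "nat list \<Rightarrow> filling \<Rightarrow> nat \<Rightarrow> nat \<Rightarrow> bool" where
  "col_lhd lam \<sigma> a b \<longleftrightarrow>
     (let r = (LEAST r. 1 \<le> r \<and> r \<le> colh lam a \<and> \<sigma> (a, r) \<noteq> \<sigma> (b, r)) in
       (r = 1 \<and> \<sigma> (a, 1) < \<sigma> (b, 1)) \<or> (2 \<le> r \<and> \<not> ccw_triple \<sigma> b a r))"

definition sorted_tableau :: "nat list \<Rightarrow> filling \<Rightarrow> bool" where
  "sorted_tableau lam \<sigma> \<longleftrightarrow>
     (\<forall>a b. 1 \<le> a \<and> a < b \<and> b \<le> length lam \<and> colh lam a = colh lam b \<longrightarrow>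
        (\<forall>r. 1 \<le> r \<and> r \<le> colh lam a \<longrightarrow> \<sigma> (a, r) = \<sigma> (b, r)) \<or> col_lhd lam \<sigma> a b)"

definition swap_cells :: "filling \<Rightarrow> nat \<times> nat \<Rightarrow> nat \<times> nat \<Rightarrow> filling" where
  "swap_cells \<sigma> p q = \<sigma>(p := \<sigma> q, q := \<sigma> p)"

text \<open>Propagation loop: tau is the filling right after the swap in row r (so the old entry
of (i,r) is now at (i+1,r)). The fuel argument only ensures termination; it is instantiated
with the column height, which bounds the number of steps.\<close>
fun T_loop :: "nat \<Rightarrow> nat list \<Rightarrow> nat \<Rightarrow> nat \<Rightarrow> filling \<Rightarrow> filling" where
  "T_loop 0 lam i r \<tau> = \<tau>"
| "T_loop (Suc k) lam i r \<tau> =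
     (if (i + 1, r + 1) \<in> dg lam \<and> (i, r + 1) \<in> dg lam \<and>
         ccw (ent \<tau> (i + 1, r + 1)) (ent \<tau> (i, r + 1)) (ent \<tau> (i + 1, r))
           \<noteq> ccw (ent \<tau> (i + 1, r + 1)) (ent \<tau> (i, r + 1)) (ent \<tau> (i, r))
      then T_loop k lam i (r + 1) (swap_cells \<tau> (i, r + 1) (i + 1, r + 1))
      else \<tau>)"

definition T_op :: "nat list \<Rightarrow> nat \<Rightarrow> nat \<Rightarrow> filling \<Rightarrow> filling" where
  "T_op lam i r \<sigma> = T_loop (colh lam i) lam i r (swap_cells \<sigma> (i, r) (i + 1, r))"

definition sref :: "nat \<Rightarrow> nat \<Rightarrow> nat" where
  "sref j x = (if x = j then j + 1 else if x = j + 1 then j else x)"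

definition perm_len :: "nat \<Rightarrow> (nat \<Rightarrow> nat) \<Rightarrow> nat" where
  "perm_len n v = card {(a, b). 1 \<le> a \<and> a < b \<and> b \<le> n \<and> v a > v b}"

text \<open>Indices j_1, ..., j_N of w0 = (s_1)(s_2 s_1)...(s_{n-1}...s_1) = s_{j_N}...s_{j_1}.\<close>
definition w0_seq :: "nat \<Rightarrow> nat list" where
  "w0_seq n = concat (map (\<lambda>k. [1..<k + 1]) (rev [1..<n]))"

text \<open>Indices i_1, i_2, ..., i_p of the PDS, in the order the multiplications are performed.\<close>
fun pds_aux :: "nat \<Rightarrow> (nat \<Rightarrow> nat) \<Rightarrow> nat list \<Rightarrow> nat list" where
  "pds_aux n v [] = []"
| "pds_aux n v (j # js) =
     (if perm_len n (v \<circ> sref j) < perm_len n v then j # pds_aux n (v \<circ> sref j) js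
      else pds_aux n v js)"

definition pds :: "nat \<Rightarrow> (nat \<Rightarrow> nat) \<Rightarrow> nat list" where
  "pds n v = pds_aux n v (w0_seq n)"

text \<open>T_v^(r) = T_{i_p} o ... o T_{i_1}: T_{i_1} is applied first.\<close>
definition T_perm :: "nat list \<Rightarrow> nat \<Rightarrow> (nat \<Rightarrow> nat) \<Rightarrow> nat \<Rightarrow> filling \<Rightarrow> filling" where
  "T_perm lam n v r \<sigma> = fold (\<lambda>i \<tau>. T_op lam i r \<tau>) (pds n v) \<sigma>"

definition same_block :: "filling \<Rightarrow> nat \<Rightarrow> nat \<Rightarrow> nat \<Rightarrow> bool" where
  "same_block \<sigma> r i j \<longleftrightarrow>
     (\<forall>k. min i j \<le> k \<and> k \<le> max i j \<longrightarrow> (\<forall>s. 1 \<le> s \<and> s < r \<longrightarrow> \<sigma> (k, s) = \<sigma> (i, s)))"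

definition row_word :: "nat \<Rightarrow> filling \<Rightarrow> nat \<Rightarrow> nat list" where
  "row_word n \<sigma> r = map (\<lambda>k. \<sigma> (k, r)) [1..<n + 1]"

definition W_set :: "nat \<Rightarrow> filling \<Rightarrow> nat \<Rightarrow> nat list set" where
  "W_set n \<sigma> r = {map (\<lambda>k. \<sigma> (\<pi> k, r)) [1..<n + 1] | \<pi>.
      \<pi> permutes {1..n} \<and> (\<forall>k\<in>{1..n}. same_block \<sigma> r k (\<pi> k))}"

definition wtilde :: "nat \<Rightarrow> filling \<Rightarrow> nat \<Rightarrow> nat list \<Rightarrow> (nat \<Rightarrow> nat)" where
  "wtilde n \<sigma> r w =
     (let C = {v. v permutes {1..n} \<and> map (\<lambda>k. \<sigma> (inv v k, r)) [1..<n + 1] = w}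
      in SOME v. v \<in> C \<and> (\<forall>u\<in>C. perm_len n v \<le> perm_len n u))"

text \<open>fam_aux m n sigma k = F^(m-k).\<close>
fun fam_aux :: "nat \<Rightarrow> nat \<Rightarrow> filling \<Rightarrow> nat \<Rightarrow> filling set" where
  "fam_aux m n \<sigma> 0 = {\<sigma>}"
| "fam_aux m n \<sigma> (Suc k) =
     {T_perm (replicate n m) n (wtilde n \<sigma> (m - k) w) (m - k) \<tau> | \<tau> w.
        \<tau> \<in> fam_aux m n \<sigma> k \<and> w \<in> W_set n \<sigma> (m - k)}"

definition rect_family :: "nat \<Rightarrow> nat \<Rightarrow> filling \<Rightarrow> filling set" where
  "rect_family m n \<sigma> = fam_aux m n \<sigma> m"

definition max_rect :: "nat list \<Rightarrow> nat \<Rightarrow> nat \<Rightarrow> bool" where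
  "max_rect lam a b \<longleftrightarrow> 1 \<le> a \<and> a \<le> b \<and> b \<le> length lam \<and>
     (\<forall>i. a \<le> i \<and> i \<le> b \<longrightarrow> colh lam i = colh lam a) \<and>
     (a = 1 \<or> colh lam (a - 1) \<noteq> colh lam a) \<and>
     (b = length lam \<or> colh lam (b + 1) \<noteq> colh lam a)"

definition shift_filling :: "filling \<Rightarrow> nat \<Rightarrow> filling" where
  "shift_filling \<sigma> a = (\<lambda>(i, r). \<sigma> (i + a - 1, r))"

definition family :: "nat list \<Rightarrow> filling \<Rightarrow> filling set" where
  "family lam \<sigma> = {\<tau>. \<forall>a b. max_rect lam a b \<longrightarrow>
      (\<exists>\<rho>\<in>rect_family (colh lam a) (b - a + 1) (shift_filling \<sigma> a).
         \<forall>i r. 1 \<le> i \<and> i \<le> b - a + 1 \<and> 1 \<le> r \<and> r \<le> colh lam a \<longrightarrow>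
           \<tau> (i + a - 1, r) = \<rho> (i, r))}"

end

theory Submission
  imports Defs "HOL-Library.Multiset"
begin

text \<open>
  If columns i and i+1 agree below row r, the operator T_i^(r) just exchanges the two columns on
  a row interval r..s, where s is the top row or the first row at which the propagated swap leaves
  the orientation of the triple above it unchanged. Such an exchange preserves maj: both columns
  have the same legs, the descents inside the interval and at row r (whose lower neighbours agree)
  are merely moved to the other column, and the orientation condition at row s+1 says exactly that
  the two descents between rows s and s+1 are redistributed but neither created nor destroyed.
  In a rectangle, wtilde w is a shortest permutation realising a rearrangement within blocks;
  minimality forces it to fix every block boundary, so its PDS only contains s_j for columns j, j+1
  of one block, which agree below row r. Hence every filling of the family has the major index of sigma,
  rectangle by rectangle.
\<close>

section \<open>Exchanging two adjacent columns on a set of rows\<close>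

definition swap_columns :: "filling \<Rightarrow> nat \<Rightarrow> nat set \<Rightarrow> filling" where
  "swap_columns \<sigma> i S = (\<lambda>(k, \<rho>).
     if \<rho> \<in> S \<and> k = i then \<sigma> (i + 1, \<rho>) else if \<rho> \<in> S \<and> k = i + 1 then \<sigma> (i, \<rho>) else \<sigma> (k, \<rho>))"

lemma swap_columns_outside [simp]: "\<rho> \<notin> S \<Longrightarrow> swap_columns \<sigma> i S (k, \<rho>) = \<sigma> (k, \<rho>)"
  and swap_columns_left [simp]: "\<rho> \<in> S \<Longrightarrow> swap_columns \<sigma> i S (i, \<rho>) = \<sigma> (Suc i, \<rho>)"
  and swap_columns_right [simp]: "\<rho> \<in> S \<Longrightarrow> swap_columns \<sigma> i S (Suc i, \<rho>) = \<sigma> (i, \<rho>)"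
  and swap_columns_other [simp]: "k \<noteq> i \<Longrightarrow> k \<noteq> Suc i \<Longrightarrow> swap_columns \<sigma> i S (k, \<rho>) = \<sigma> (k, \<rho>)"
  by (auto simp: swap_columns_def)

text \<open>The propagation loop of T_i^(r) continues from row s to s+1 exactly when this fails.\<close>

definition orientation_kept :: "filling \<Rightarrow> nat \<Rightarrow> nat \<Rightarrow> bool" where
  "orientation_kept \<sigma> i s \<longleftrightarrow>
     ccw (enat (\<sigma> (i + 1, s + 1))) (enat (\<sigma> (i, s + 1))) (enat (\<sigma> (i, s))) =
     ccw (enat (\<sigma> (i + 1, s + 1))) (enat (\<sigma> (i, s + 1))) (enat (\<sigma> (i + 1, s)))"

definition descent_weight :: "nat list \<Rightarrow> filling \<Rightarrow> nat \<times> nat \<Rightarrow> nat" where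
  "descent_weight lam \<tau> c = (if 2 \<le> snd c \<and> \<tau> (fst c, snd c - 1) < \<tau> c then leg lam c + 1 else 0)"

lemma dg_eq_Sigma: "dg lam = Sigma {1..length lam} (\<lambda>i. {1..colh lam i})"
  unfolding dg_def by auto

lemma finite_dg: "finite (dg lam)"
  unfolding dg_eq_Sigma by simp

lemma maj_eq_sum_descent_weight: "maj lam \<tau> = (\<Sum>c\<in>dg lam. descent_weight lam \<tau> c)"
  unfolding maj_def descent_weight_def by (rule sum.inter_filter[OF finite_dg])

lemma ccw_eq_imp_descent_count_eq:
  fixes a b c d :: nat
  assumes "ccw (enat a) (enat b) (enat c) = ccw (enat a) (enat b) (enat d)"
  shows "of_bool (c < b) + of_bool (d < a) = (of_bool (d < b) + of_bool (c < a) :: nat)"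
  using assms unfolding ccw_def by auto

lemma descent_weight_eq:
  "descent_weight lam \<tau> (k, \<rho>) =
     (if 2 \<le> \<rho> then (leg lam (k, \<rho>) + 1) * of_bool (\<tau> (k, \<rho> - 1) < \<tau> (k, \<rho>)) else 0)"
  by (simp add: descent_weight_def)

lemma descent_weight_swap_columns_pair:
  assumes "colh lam (Suc i) = colh lam i" "1 \<le> r0" "r0 \<le> s"
    and bottom: "r0 = 1 \<or> \<sigma> (i, r0 - 1) = \<sigma> (Suc i, r0 - 1)"
    and top: "\<rho> = Suc s \<Longrightarrow> orientation_kept \<sigma> i s"
  defines "\<sigma>' \<equiv> swap_columns \<sigma> i {r0..s}"
  shows "descent_weight lam \<sigma>' (i, \<rho>) + descent_weight lam \<sigma>' (Suc i, \<rho>) =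
         descent_weight lam \<sigma> (i, \<rho>) + descent_weight lam \<sigma> (Suc i, \<rho>)"
proof (cases "2 \<le> \<rho>")
  case True
  have "of_bool (\<sigma>' (i, \<rho> - 1) < \<sigma>' (i, \<rho>)) + of_bool (\<sigma>' (Suc i, \<rho> - 1) < \<sigma>' (Suc i, \<rho>)) =
        (of_bool (\<sigma> (i, \<rho> - 1) < \<sigma> (i, \<rho>)) + of_bool (\<sigma> (Suc i, \<rho> - 1) < \<sigma> (Suc i, \<rho>)) :: nat)"
  proof -
    consider "\<rho> - 1 \<in> {r0..s} \<longleftrightarrow> \<rho> \<in> {r0..s}" | "\<rho> = r0" | "\<rho> = Suc s"
      using \<open>r0 \<le> s\<close> by fastforce
    then show ?thesis
    proof cases
      case 1
      then show ?thesis by (cases "\<rho> \<in> {r0..s}") (simp_all add: \<sigma>'_def)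
    next
      case 2
      with True bottom \<open>r0 \<le> s\<close> show ?thesis by (simp add: \<sigma>'_def)
    next
      case 3
      with top ccw_eq_imp_descent_count_eq[of "\<sigma> (Suc i, Suc s)" "\<sigma> (i, Suc s)" "\<sigma> (i, s)" "\<sigma> (Suc i, s)"]
      show ?thesis using \<open>1 \<le> r0\<close> \<open>r0 \<le> s\<close> by (simp add: \<sigma>'_def orientation_kept_def)
    qed
  qed
  moreover have "descent_weight lam \<tau> (i, \<rho>) + descent_weight lam \<tau> (Suc i, \<rho>) =
      (leg lam (i, \<rho>) + 1) *
      (of_bool (\<tau> (i, \<rho> - 1) < \<tau> (i, \<rho>)) + of_bool (\<tau> (Suc i, \<rho> - 1) < \<tau> (Suc i, \<rho>)))" for \<tau>
    using True assms(1) by (simp add: descent_weight_eq leg_def distrib_left)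
  ultimately show ?thesis by presburger
qed (simp add: descent_weight_eq)

lemma sum_two_columns:
  "(\<Sum>c\<in>{i, Suc i} \<times> A. f c) = (\<Sum>\<rho>\<in>A. f (i, \<rho>) + f (Suc i, \<rho>))"
proof -
  have "(\<Sum>c\<in>{i, Suc i} \<times> A. f c) = (\<Sum>k\<in>{i, Suc i}. \<Sum>\<rho>\<in>A. f (k, \<rho>))"
    by (simp add: sum.cartesian_product)
  then show ?thesis by (simp add: sum.distrib)
qed

lemma maj_swap_columns:
  assumes "1 \<le> i" "Suc i \<le> length lam" "colh lam i = m" "colh lam (Suc i) = m"
    and "1 \<le> r0" "r0 \<le> s" "s \<le> m"
    and bottom: "r0 = 1 \<or> \<sigma> (i, r0 - 1) = \<sigma> (Suc i, r0 - 1)"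
    and top: "s = m \<or> orientation_kept \<sigma> i s"
  shows "maj lam (swap_columns \<sigma> i {r0..s}) = maj lam \<sigma>"
proof -
  let ?\<sigma>' = "swap_columns \<sigma> i {r0..s}" and ?C = "{i, Suc i} \<times> {1..m}"
  have C: "?C \<subseteq> dg lam"
    using assms(1-4) by (auto simp: dg_def)
  have rest: "(\<Sum>c\<in>dg lam - ?C. descent_weight lam ?\<sigma>' c) = (\<Sum>c\<in>dg lam - ?C. descent_weight lam \<sigma> c)"
  proof (rule sum.cong)
    fix c assume c: "c \<in> dg lam - ?C"
    obtain k \<rho> where k\<rho>: "c = (k, \<rho>)" by fastforce
    have "k \<notin> {i, Suc i}"
      using c assms(3,4) unfolding k\<rho> dg_def by auto
    with k\<rho> show "descent_weight lam ?\<sigma>' c = descent_weight lam \<sigma> c"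
      by (simp add: descent_weight_def)
  qed simp
  have "(\<Sum>c\<in>?C. descent_weight lam ?\<sigma>' c) = (\<Sum>c\<in>?C. descent_weight lam \<sigma> c)"
    unfolding sum_two_columns
  proof (rule sum.cong)
    fix \<rho> assume "\<rho> \<in> {1..m}"
    then have "\<rho> = Suc s \<Longrightarrow> orientation_kept \<sigma> i s"
      using top by auto
    then show "descent_weight lam ?\<sigma>' (i, \<rho>) + descent_weight lam ?\<sigma>' (Suc i, \<rho>) =
               descent_weight lam \<sigma> (i, \<rho>) + descent_weight lam \<sigma> (Suc i, \<rho>)"
      using assms(3-6) bottom by (intro descent_weight_swap_columns_pair) auto
  qed simp
  with rest C show ?thesis
    unfolding maj_eq_sum_descent_weight by (simp add: sum.subset_diff[OF C finite_dg])
qed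

section \<open>The operators T_i^(r)\<close>

lemma swap_cells_eq_swap_columns: "swap_cells \<sigma> (i, r) (Suc i, r) = swap_columns \<sigma> i {r..r}"
  by (auto simp: swap_cells_def swap_columns_def)

lemma swap_cells_swap_columns:
  "r0 \<le> Suc r \<Longrightarrow>
   swap_cells (swap_columns \<sigma> i {r0..r}) (i, Suc r) (Suc i, Suc r) = swap_columns \<sigma> i {r0..Suc r}"
  by (auto simp: swap_cells_def swap_columns_def)

lemma T_loop_eq_swap_columns:
  assumes "1 \<le> i" "Suc i \<le> length lam" "colh lam i = m" "colh lam (Suc i) = m"
    and "1 \<le> r0" "r0 \<le> r" "r \<le> m" "m \<le> k + r"
  shows "\<exists>s. r \<le> s \<and> s \<le> m \<and> (s = m \<or> orientation_kept \<sigma> i s) \<and>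
           T_loop k lam i r (swap_columns \<sigma> i {r0..r}) = swap_columns \<sigma> i {r0..s}"
  using assms(6-8)
proof (induction k arbitrary: r)
  case 0
  then show ?case by auto
next
  case (Suc k)
  let ?\<tau> = "swap_columns \<sigma> i {r0..r}"
  have in_dg: "(Suc i, Suc r) \<in> dg lam \<and> (i, Suc r) \<in> dg lam \<longleftrightarrow> Suc r \<le> m"
    using assms(1-4) by (auto simp: dg_def)
  have changed: "ccw (ent ?\<tau> (Suc i, Suc r)) (ent ?\<tau> (i, Suc r)) (ent ?\<tau> (Suc i, r)) \<noteq>
                 ccw (ent ?\<tau> (Suc i, Suc r)) (ent ?\<tau> (i, Suc r)) (ent ?\<tau> (i, r))
                 \<longleftrightarrow> \<not> orientation_kept \<sigma> i r"
    using Suc.prems assms(5) by (auto simp: ent_def orientation_kept_def)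
  show ?case
  proof (cases "Suc r \<le> m \<and> \<not> orientation_kept \<sigma> i r")
    case True
    then obtain s where "Suc r \<le> s \<and> s \<le> m \<and> (s = m \<or> orientation_kept \<sigma> i s) \<and>
        T_loop k lam i (Suc r) (swap_columns \<sigma> i {r0..Suc r}) = swap_columns \<sigma> i {r0..s}"
      using Suc.IH[of "Suc r"] Suc.prems by auto
    moreover have "T_loop (Suc k) lam i r ?\<tau> = T_loop k lam i (Suc r) (swap_columns \<sigma> i {r0..Suc r})"
      using True in_dg changed Suc.prems swap_cells_swap_columns[of r0 r \<sigma> i] by simp
    ultimately show ?thesis by (metis Suc_leD)
  next
    case False
    then have "T_loop (Suc k) lam i r ?\<tau> = ?\<tau>"
      using in_dg changed by auto
    with False Suc.prems show ?thesis by (intro exI[of _ r]) auto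
  qed
qed

lemma T_op_eq_swap_columns:
  assumes "1 \<le> i" "Suc i \<le> length lam" "colh lam i = m" "colh lam (Suc i) = m"
    and "1 \<le> r" "r \<le> m"
  obtains s where "r \<le> s" "s \<le> m" "s = m \<or> orientation_kept \<sigma> i s"
    "T_op lam i r \<sigma> = swap_columns \<sigma> i {r..s}"
  using T_loop_eq_swap_columns[OF assms(1-5) order_refl assms(6), where k = m and \<sigma> = \<sigma>] assms(3)
  by (auto simp: T_op_def swap_cells_eq_swap_columns)

lemma T_op_below:
  assumes "1 \<le> i" "Suc i \<le> length lam" "colh lam i = m" "colh lam (Suc i) = m"
    and "1 \<le> r" "r \<le> m" "s < r"
  shows "T_op lam i r \<sigma> (k, s) = \<sigma> (k, s)"
proof -
  obtain s' where "r \<le> s'" "T_op lam i r \<sigma> = swap_columns \<sigma> i {r..s'}"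
    using T_op_eq_swap_columns[OF assms(1-6)] by blast
  with assms(7) show ?thesis by simp
qed

lemma maj_T_op:
  assumes "1 \<le> i" "Suc i \<le> length lam" "colh lam i = m" "colh lam (Suc i) = m"
    and "1 \<le> r" "r \<le> m" "r = 1 \<or> \<sigma> (i, r - 1) = \<sigma> (Suc i, r - 1)"
  shows "maj lam (T_op lam i r \<sigma>) = maj lam \<sigma>"
proof -
  obtain s where "r \<le> s" "s \<le> m" "s = m \<or> orientation_kept \<sigma> i s"
    "T_op lam i r \<sigma> = swap_columns \<sigma> i {r..s}"
    using T_op_eq_swap_columns[OF assms(1-6)] by blast
  with assms show ?thesis by (simp add: maj_swap_columns)
qed

lemma colh_replicate: "1 \<le> i \<Longrightarrow> i \<le> n \<Longrightarrow> colh (replicate n m) i = m"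
  by (simp add: colh_def)

lemma dg_replicate: "dg (replicate n m) = {1..n} \<times> {1..m}"
  unfolding dg_def using colh_replicate by auto

lemma same_block_Suc_iff: "same_block \<sigma> r j (Suc j) \<longleftrightarrow> (\<forall>s. 1 \<le> s \<and> s < r \<longrightarrow> \<sigma> (j, s) = \<sigma> (Suc j, s))"
  unfolding same_block_def by (metis le_Suc_eq le_antisym max.absorb2 min.absorb1 order_refl)

lemma fold_T_op_below:
  assumes "1 \<le> r" "r \<le> m" "s < r" "\<forall>j\<in>set js. 1 \<le> j \<and> j < n"
  shows "fold (\<lambda>i \<tau>. T_op (replicate n m) i r \<tau>) js \<tau> (k, s) = \<tau> (k, s)"
  using assms(4)
proof (induction js arbitrary: \<tau>)
  case (Cons j js)
  then show ?case
    using T_op_below[of j "replicate n m" m r s] assms(1-3) by (simp add: colh_replicate)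
qed simp

lemma maj_fold_T_op:
  assumes "1 \<le> r" "r \<le> m"
    and "\<forall>j\<in>set js. 1 \<le> j \<and> j < n \<and> same_block \<sigma> r j (Suc j)"
    and "\<forall>k s. 1 \<le> s \<and> s < r \<longrightarrow> \<tau> (k, s) = \<sigma> (k, s)"
  shows "maj (replicate n m) (fold (\<lambda>i \<tau>. T_op (replicate n m) i r \<tau>) js \<tau>) = maj (replicate n m) \<tau>"
  using assms(3,4)
proof (induction js arbitrary: \<tau>)
  case (Cons j js)
  then have j: "1 \<le> j" "Suc j \<le> length (replicate n m)" and "same_block \<sigma> r j (Suc j)"
    by auto
  then have bottom: "r = 1 \<or> \<tau> (j, r - 1) = \<tau> (Suc j, r - 1)"
  proof (cases "r = 1")
    case False
    then have "1 \<le> r - 1 \<and> r - 1 < r" using assms(1) by simp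
    then show ?thesis
      using Cons.prems(2) \<open>same_block \<sigma> r j (Suc j)\<close> unfolding same_block_Suc_iff by metis
  qed simp
  have col: "colh (replicate n m) j = m" "colh (replicate n m) (Suc j) = m"
    using j by (simp_all add: colh_replicate)
  have "\<forall>k s. 1 \<le> s \<and> s < r \<longrightarrow> T_op (replicate n m) j r \<tau> (k, s) = \<sigma> (k, s)"
    using T_op_below[OF j col assms(1,2)] Cons.prems(2) by simp
  with Cons show ?case
    using maj_T_op[OF j col assms(1,2) bottom] by simp
qed simp

section \<open>Shortest permutations respect blocks\<close>

lemma perm_len_le_comp_sref:
  assumes "1 \<le> j" "j < n" "v j \<le> v (Suc j)"
  shows "perm_len n v \<le> perm_len n (v \<circ> sref j)"
proof -
  let ?A = "{(a, b). 1 \<le> a \<and> a < b \<and> b \<le> n \<and> v a > v b}"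
  let ?B = "{(a, b). 1 \<le> a \<and> a < b \<and> b \<le> n \<and> (v \<circ> sref j) a > (v \<circ> sref j) b}"
  let ?f = "\<lambda>(a, b). (sref j a, sref j b)"
  have sref_sref: "sref j (sref j x) = x" for x
    by (simp add: sref_def)
  have "inj_on ?f ?A"
    by (rule inj_onI) (auto simp: sref_def split: if_splits)
  moreover have "?f ` ?A \<subseteq> ?B"
  proof clarify
    fix a b assume ab: "1 \<le> a" "a < b" "b \<le> n" "v b < v a"
    then have "(a, b) \<noteq> (j, Suc j)" using assms(3) by auto
    with ab assms(1,2) show "1 \<le> sref j a \<and> sref j a < sref j b \<and> sref j b \<le> n \<and>
        (v \<circ> sref j) (sref j b) < (v \<circ> sref j) (sref j a)"
      by (auto simp: sref_def sref_sref)
  qed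
  moreover have "finite ?B"
    by (rule finite_subset[of _ "{1..n} \<times> {1..n}"]) auto
  ultimately show ?thesis
    unfolding perm_len_def by (rule card_inj_on_le)
qed

lemma perm_len_comp_transpose_less:
  assumes "1 \<le> x" "x < y" "y \<le> n" "v y < v x"
  shows "perm_len n (v \<circ> transpose x y) < perm_len n v"
proof -
  let ?A = "{(a, b). 1 \<le> a \<and> a < b \<and> b \<le> n \<and> v a > v b}"
  let ?B = "{(a, b). 1 \<le> a \<and> a < b \<and> b \<le> n \<and> (v \<circ> transpose x y) a > (v \<circ> transpose x y) b}"
  let ?f = "\<lambda>(a, b). if x \<le> a \<and> b \<le> y then (a, b) else (transpose x y a, transpose x y b)"
  have "inj_on ?f ?B"
  proof (rule inj_onI)
    fix p q assume "p \<in> ?B" "q \<in> ?B" "?f p = ?f q"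
    with assms show "p = q"
      by (cases p, cases q) (auto simp: transpose_def split: if_splits)
  qed
  moreover have "?f ` ?B \<subseteq> ?A - {(x, y)}"
  proof
    fix p assume "p \<in> ?f ` ?B"
    then obtain a b where "(a, b) \<in> ?B" "p = ?f (a, b)" by auto
    with assms show "p \<in> ?A - {(x, y)}"
      by (auto simp: transpose_def split: if_splits)
  qed
  moreover have finA: "finite ?A"
    by (rule finite_subset[of _ "{1..n} \<times> {1..n}"]) auto
  ultimately have "card ?B \<le> card (?A - {(x, y)})"
    by (intro card_inj_on_le) auto
  also have "\<dots> < card ?A"
    using finA assms by (intro card_Diff1_less) auto
  finally show ?thesis unfolding perm_len_def .
qed

definition respects_blocks :: "filling \<Rightarrow> nat \<Rightarrow> nat \<Rightarrow> (nat \<Rightarrow> nat) \<Rightarrow> bool" where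
  "respects_blocks \<sigma> r n v \<longleftrightarrow>
     (\<forall>t. 1 \<le> t \<and> t < n \<and> \<not> same_block \<sigma> r t (Suc t) \<longrightarrow> (\<forall>x\<in>{1..n}. x \<le> t \<longleftrightarrow> v x \<le> t))"

lemma set_pds_aux_subset: "set (pds_aux n v js) \<subseteq> set js"
  by (induction js arbitrary: v) auto

lemma pds_aux_in_blocks:
  assumes "\<forall>j\<in>set js. 1 \<le> j \<and> j < n" "respects_blocks \<sigma> r n v" "i \<in> set (pds_aux n v js)"
  shows "same_block \<sigma> r i (Suc i)"
  using assms
proof (induction js arbitrary: v)
  case (Cons j js)
  show ?case
  proof (cases "perm_len n (v \<circ> sref j) < perm_len n v")
    case True
    have j: "1 \<le> j" "j < n" using Cons.prems(1) by auto
    have "v (Suc j) < v j"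
      using perm_len_le_comp_sref[OF j, of v] True by linarith
    have block: "same_block \<sigma> r j (Suc j)"
    proof (rule ccontr)
      assume "\<not> same_block \<sigma> r j (Suc j)"
      then have "x \<le> j \<longleftrightarrow> v x \<le> j" if "x \<in> {1..n}" for x
        using Cons.prems(2) j that unfolding respects_blocks_def by blast
      from this[of j] this[of "Suc j"] have "v j \<le> j" "\<not> v (Suc j) \<le> j"
        using j by simp_all
      with \<open>v (Suc j) < v j\<close> show False by simp
    qed
    have "respects_blocks \<sigma> r n (v \<circ> sref j)"
      unfolding respects_blocks_def
    proof (intro allI impI ballI)
      fix t x assume t: "1 \<le> t \<and> t < n \<and> \<not> same_block \<sigma> r t (Suc t)" and x: "x \<in> {1..n}"
      have "t \<noteq> j" using t block by auto
      then have "x \<le> t \<longleftrightarrow> sref j x \<le> t" by (auto simp: sref_def)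
      also have "\<dots> \<longleftrightarrow> v (sref j x) \<le> t"
      proof -
        have "sref j x \<in> {1..n}" using x j by (auto simp: sref_def)
        then show ?thesis using Cons.prems(2) t unfolding respects_blocks_def by blast
      qed
      finally show "x \<le> t \<longleftrightarrow> (v \<circ> sref j) x \<le> t" by simp
    qed
    with True Cons block show ?thesis by auto
  next
    case False
    with Cons show ?thesis by simp
  qed
qed simp

lemma w0_seq_range: "j \<in> set (w0_seq n) \<Longrightarrow> 1 \<le> j \<and> j < n"
  unfolding w0_seq_def by auto

lemma T_perm_below:
  assumes "1 \<le> r" "r \<le> m" "s < r"
  shows "T_perm (replicate n m) n v r \<tau> (k, s) = \<tau> (k, s)"
  unfolding T_perm_def pds_def
  using fold_T_op_below[OF assms] set_pds_aux_subset w0_seq_range by blast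

lemma maj_T_perm:
  assumes "1 \<le> r" "r \<le> m" "respects_blocks \<sigma> r n v"
    and "\<forall>k s. 1 \<le> s \<and> s < r \<longrightarrow> \<tau> (k, s) = \<sigma> (k, s)"
  shows "maj (replicate n m) (T_perm (replicate n m) n v r \<tau>) = maj (replicate n m) \<tau>"
  unfolding T_perm_def pds_def
proof (rule maj_fold_T_op[OF assms(1,2) _ assms(4)])
  show "\<forall>j\<in>set (pds_aux n v (w0_seq n)). 1 \<le> j \<and> j < n \<and> same_block \<sigma> r j (Suc j)"
    using pds_aux_in_blocks[OF _ assms(3)] set_pds_aux_subset w0_seq_range by blast
qed

lemma image_mset_mset_set_bij_betw:
  assumes "bij_betw f A B" "\<forall>x\<in>A. g (f x) = h x"
  shows "image_mset h (mset_set A) = image_mset g (mset_set B)"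
proof -
  have "image_mset g (mset_set B) = image_mset g (image_mset f (mset_set A))"
    using assms(1) by (simp add: bij_betw_def image_mset_mset_set)
  also have "\<dots> = image_mset h (mset_set A)"
    using assms(2) by (cases "finite A") (auto simp: multiset.map_comp intro: image_mset_cong)
  finally show ?thesis ..
qed

lemma exists_equal_image_in_diff:
  assumes "finite A" "finite B" "image_mset f (mset_set A) = image_mset f (mset_set B)" "y \<in> A - B"
  shows "\<exists>x\<in>B - A. f x = f y"
proof -
  have split: "mset_set X = mset_set (X \<inter> Y) + mset_set (X - Y)" if "finite X" for X Y :: "'a set"
  proof -
    have "mset_set X = mset_set ((X \<inter> Y) \<union> (X - Y))" by (simp add: Int_Diff_Un)
    also have "\<dots> = mset_set (X \<inter> Y) + mset_set (X - Y)"
      using that by (intro mset_set_Union) auto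
    finally show ?thesis .
  qed
  have "image_mset f (mset_set (A \<inter> B)) + image_mset f (mset_set (A - B)) =
        image_mset f (mset_set (A \<inter> B)) + image_mset f (mset_set (B - A))"
    using assms(3) split[OF assms(1), of B] split[OF assms(2), of A]
    by (metis Int_commute image_mset_union)
  then have "image_mset f (mset_set (A - B)) = image_mset f (mset_set (B - A))"
    by (rule add_left_imp_eq)
  moreover have "f y \<in># image_mset f (mset_set (A - B))"
    using assms(1,4) by simp
  ultimately show ?thesis
    using assms(2) by auto
qed

lemma same_block_le_iff:
  assumes "same_block \<sigma> r a c" "\<not> same_block \<sigma> r t (Suc t)"
  shows "a \<le> t \<longleftrightarrow> c \<le> t"
proof (rule ccontr)
  assume "(a \<le> t) \<noteq> (c \<le> t)"
  then have range: "min a c \<le> t" "Suc t \<le> max a c" by auto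
  have block: "\<sigma> (k, s) = \<sigma> (a, s)" if "min a c \<le> k" "k \<le> max a c" "1 \<le> s" "s < r" for k s
    using assms(1) that unfolding same_block_def by blast
  have "same_block \<sigma> r t (Suc t)"
    unfolding same_block_Suc_iff using block range by (metis Suc_leD le_SucI)
  with assms(2) show False ..
qed

text \<open>
  If v moved some column across a block boundary t, comparing the multisets of row-r entries
  of the columns left of t and of those sent left of t by v yields x' \<le> t < y with equal entries
  and v y \<le> t < v x'; then v \<circ> (x' y) is admissible as well, and shorter.
\<close>

lemma minimal_respects_blocks:
  fixes n :: nat
  defines "N \<equiv> {1..n}"
  assumes \<pi>: "\<pi> permutes N" "\<forall>k\<in>N. same_block \<sigma> r k (\<pi> k)"
    and v: "v permutes N" "\<forall>y\<in>N. \<sigma> (\<pi> (v y), r) = \<sigma> (y, r)"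
    and minimal: "\<And>u. u permutes N \<Longrightarrow> \<forall>y\<in>N. \<sigma> (\<pi> (u y), r) = \<sigma> (y, r) \<Longrightarrow>
      perm_len n v \<le> perm_len n u"
  shows "respects_blocks \<sigma> r n v"
  unfolding respects_blocks_def
proof (intro allI impI ballI)
  fix t x assume t: "1 \<le> t \<and> t < n \<and> \<not> same_block \<sigma> r t (Suc t)" and x: "x \<in> {1..n}"
  show "x \<le> t \<longleftrightarrow> v x \<le> t"
  proof (rule ccontr)
    assume x_crosses: "(x \<le> t) \<noteq> (v x \<le> t)"
    define b where "b y = \<sigma> (y, r)" for y
    define L where "L = {y\<in>N. y \<le> t}"
    define M where "M = {y\<in>N. v y \<le> t}"
    have \<pi>v: "\<pi> \<circ> v permutes N"
      by (rule permutes_compose[OF v(1) \<pi>(1)])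
    have crosses_iff: "\<pi> (v y) \<le> t \<longleftrightarrow> v y \<le> t" "\<pi> (v y) \<in> N" if "y \<in> N" for y
    proof -
      have vy: "v y \<in> N" using permutes_in_image[OF v(1)] that by simp
      show "\<pi> (v y) \<le> t \<longleftrightarrow> v y \<le> t"
        using same_block_le_iff[OF \<pi>(2)[rule_format, OF vy]] t by blast
      show "\<pi> (v y) \<in> N"
        using permutes_in_image[OF \<pi>(1)] vy by simp
    qed
    have "(\<pi> \<circ> v) ` M = L"
    proof
      show "(\<pi> \<circ> v) ` M \<subseteq> L"
        using crosses_iff by (auto simp: M_def L_def)
      show "L \<subseteq> (\<pi> \<circ> v) ` M"
      proof
        fix z assume z: "z \<in> L"
        then have "z \<in> (\<pi> \<circ> v) ` N"
          using permutes_image[OF \<pi>v] by (simp add: L_def)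
        then obtain y where "y \<in> N" "z = \<pi> (v y)" by auto
        with z crosses_iff show "z \<in> (\<pi> \<circ> v) ` M"
          by (auto simp: M_def L_def)
      qed
    qed
    moreover have "M \<subseteq> N"
      by (auto simp: M_def)
    ultimately have "bij_betw (\<pi> \<circ> v) M L"
      using bij_betw_subset[OF permutes_imp_bij[OF \<pi>v]] by blast
    then have multisets: "image_mset b (mset_set M) = image_mset b (mset_set L)"
      using v(2) by (intro image_mset_mset_set_bij_betw) (auto simp: M_def b_def)
    have fin: "finite L" "finite M"
      unfolding L_def M_def N_def by simp_all
    obtain y where y: "y \<in> M - L"
    proof (cases "x \<le> t")
      case True
      with x x_crosses have "x \<in> L - M" by (simp add: L_def M_def N_def)
      then show ?thesis
        using exists_equal_image_in_diff[OF fin(1,2) multisets[symmetric]] that by blast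
    next
      case False
      with x x_crosses have "x \<in> M - L" by (simp add: L_def M_def N_def)
      then show ?thesis by (rule that)
    qed
    then obtain x' where x': "x' \<in> L - M" "b x' = b y"
      using exists_equal_image_in_diff[OF fin(2,1) multisets] by blast
    have order: "1 \<le> x'" "x' < y" "y \<le> n" "v y < v x'" and in_N: "x' \<in> N" "y \<in> N"
      using x' y by (auto simp: L_def M_def N_def)
    define u where "u = v \<circ> transpose x' y"
    have "u permutes N"
      unfolding u_def by (rule permutes_compose[OF permutes_swap_id[OF in_N] v(1)])
    moreover have "\<forall>z\<in>N. \<sigma> (\<pi> (u z), r) = \<sigma> (z, r)"
    proof
      fix z assume "z \<in> N"
      then have "transpose x' y z \<in> N" "b (transpose x' y z) = b z"
        using in_N x'(2) by (auto simp: transpose_def)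
      then show "\<sigma> (\<pi> (u z), r) = \<sigma> (z, r)"
        using v(2) unfolding u_def b_def by simp
    qed
    ultimately have "perm_len n v \<le> perm_len n u"
      by (rule minimal)
    moreover have "perm_len n u < perm_len n v"
      unfolding u_def by (rule perm_len_comp_transpose_less[OF order])
    ultimately show False by simp
  qed
qed

lemma map_permuted_row_eq_iff:
  assumes "u permutes {1..n}"
  shows "map (\<lambda>k. \<sigma> (inv u k, r)) [1..<n + 1] = map (\<lambda>k. \<sigma> (\<pi> k, r)) [1..<n + 1] \<longleftrightarrow>
         (\<forall>y\<in>{1..n}. \<sigma> (\<pi> (u y), r) = \<sigma> (y, r))"
proof -
  have "map (\<lambda>k. \<sigma> (inv u k, r)) [1..<n + 1] = map (\<lambda>k. \<sigma> (\<pi> k, r)) [1..<n + 1] \<longleftrightarrow>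
        (\<forall>k\<in>{1..n}. \<sigma> (inv u k, r) = \<sigma> (\<pi> k, r))"
    by auto
  also have "\<dots> \<longleftrightarrow> (\<forall>y\<in>{1..n}. \<sigma> (\<pi> (u y), r) = \<sigma> (y, r))"
  proof
    assume H: "\<forall>k\<in>{1..n}. \<sigma> (inv u k, r) = \<sigma> (\<pi> k, r)"
    show "\<forall>y\<in>{1..n}. \<sigma> (\<pi> (u y), r) = \<sigma> (y, r)"
    proof
      fix y assume "y \<in> {1..n}"
      then have "u y \<in> {1..n}" using permutes_in_image[OF assms] by simp
      then show "\<sigma> (\<pi> (u y), r) = \<sigma> (y, r)"
        using H permutes_inverses(2)[OF assms, of y] by metis
    qed
  next
    assume H: "\<forall>y\<in>{1..n}. \<sigma> (\<pi> (u y), r) = \<sigma> (y, r)"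
    show "\<forall>k\<in>{1..n}. \<sigma> (inv u k, r) = \<sigma> (\<pi> k, r)"
    proof
      fix k assume "k \<in> {1..n}"
      then have "inv u k \<in> {1..n}" using permutes_in_image[OF permutes_inv[OF assms]] by simp
      then show "\<sigma> (inv u k, r) = \<sigma> (\<pi> k, r)"
        using H permutes_inverses(1)[OF assms, of k] by metis
    qed
  qed
  finally show ?thesis .
qed

lemma wtilde_respects_blocks:
  assumes "w \<in> W_set n \<sigma> r"
  shows "respects_blocks \<sigma> r n (wtilde n \<sigma> r w)"
proof -
  obtain \<pi> where \<pi>: "\<pi> permutes {1..n}" "\<forall>k\<in>{1..n}. same_block \<sigma> r k (\<pi> k)"
    and w: "w = map (\<lambda>k. \<sigma> (\<pi> k, r)) [1..<n + 1]"
    using assms unfolding W_set_def by auto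
  define C where "C = {v. v permutes {1..n} \<and> map (\<lambda>k. \<sigma> (inv v k, r)) [1..<n + 1] = w}"
  have C_iff: "u \<in> C \<longleftrightarrow> u permutes {1..n} \<and> (\<forall>y\<in>{1..n}. \<sigma> (\<pi> (u y), r) = \<sigma> (y, r))" for u
  proof (cases "u permutes {1..n}")
    case True
    then show ?thesis unfolding C_def w by (simp only: mem_Collect_eq map_permuted_row_eq_iff)
  qed (simp add: C_def)
  have "inv \<pi> \<in> C"
    using C_iff permutes_inv[OF \<pi>(1)] permutes_inverses(1)[OF \<pi>(1)] by simp
  from ex_has_least_nat[of "\<lambda>v. v \<in> C", OF this, of "perm_len n"]
  have "\<exists>v. v \<in> C \<and> (\<forall>u\<in>C. perm_len n v \<le> perm_len n u)"
    by blast
  then have "wtilde n \<sigma> r w \<in> C \<and> (\<forall>u\<in>C. perm_len n (wtilde n \<sigma> r w) \<le> perm_len n u)"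
    unfolding wtilde_def C_def[symmetric] Let_def by (rule someI_ex)
  with \<pi> C_iff show ?thesis
    by (intro minimal_respects_blocks) auto
qed

section \<open>The family of a rectangle\<close>

lemma fam_aux_below:
  assumes "k \<le> m" "\<tau> \<in> fam_aux m n \<sigma> k" "1 \<le> s" "s \<le> m - k"
  shows "\<tau> (i, s) = \<sigma> (i, s)"
  using assms
proof (induction k arbitrary: \<tau>)
  case (Suc k)
  then obtain \<tau>0 w where "\<tau> = T_perm (replicate n m) n (wtilde n \<sigma> (m - k) w) (m - k) \<tau>0"
    "\<tau>0 \<in> fam_aux m n \<sigma> k"
    by auto
  with Suc show ?case
    using T_perm_below[of "m - k" m s] by simp
qed simp

lemma maj_fam_aux:
  assumes "k \<le> m" "\<tau> \<in> fam_aux m n \<sigma> k"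
  shows "maj (replicate n m) \<tau> = maj (replicate n m) \<sigma>"
  using assms
proof (induction k arbitrary: \<tau>)
  case (Suc k)
  then obtain \<tau>0 w where \<tau>: "\<tau> = T_perm (replicate n m) n (wtilde n \<sigma> (m - k) w) (m - k) \<tau>0"
    and \<tau>0: "\<tau>0 \<in> fam_aux m n \<sigma> k" and w: "w \<in> W_set n \<sigma> (m - k)"
    by auto
  have "\<forall>i s. 1 \<le> s \<and> s < m - k \<longrightarrow> \<tau>0 (i, s) = \<sigma> (i, s)"
    using fam_aux_below[OF _ \<tau>0] Suc.prems(1) by simp
  then have "maj (replicate n m) \<tau> = maj (replicate n m) \<tau>0"
    unfolding \<tau> using Suc.prems(1) by (intro maj_T_perm[OF _ _ wtilde_respects_blocks[OF w]]) auto
  with Suc \<tau>0 show ?case by simp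
qed simp

lemma maj_rect_family: "\<rho> \<in> rect_family m n \<sigma> \<Longrightarrow> maj (replicate n m) \<rho> = maj (replicate n m) \<sigma>"
  unfolding rect_family_def by (rule maj_fam_aux[OF order_refl])

section \<open>General shapes\<close>

lemma sum_descent_weight_max_rect:
  assumes rect: "max_rect lam a b"
    and agree: "\<forall>i r. 1 \<le> i \<and> i \<le> b - a + 1 \<and> 1 \<le> r \<and> r \<le> colh lam a \<longrightarrow> \<tau> (i + a - 1, r) = \<rho> (i, r)"
  shows "(\<Sum>c\<in>{a..b} \<times> {1..colh lam a}. descent_weight lam \<tau> c) = maj (replicate (b - a + 1) (colh lam a)) \<rho>"
proof -
  let ?h = "colh lam a" and ?w = "b - a + 1"
  have ab: "1 \<le> a" "a \<le> b" and height: "\<And>i. a \<le> i \<Longrightarrow> i \<le> b \<Longrightarrow> colh lam i = ?h"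
    using rect unfolding max_rect_def by blast+
  have cell: "descent_weight (replicate ?w ?h) \<rho> (j, r) = descent_weight lam \<tau> (j + a - 1, r)"
    if "1 \<le> j" "j \<le> ?w" "1 \<le> r" "r \<le> ?h" for j r
  proof -
    have "colh lam (j + a - 1) = ?h" "colh (replicate ?w ?h) j = ?h"
      using that ab by (auto intro: height simp only: colh_replicate)
    moreover have "\<tau> (j + a - 1, r') = \<rho> (j, r')" if "1 \<le> r'" "r' \<le> r" for r'
      using that \<open>1 \<le> j\<close> \<open>j \<le> ?w\<close> \<open>r \<le> ?h\<close> by (intro agree[rule_format]) simp
    ultimately show ?thesis
      by (auto simp: descent_weight_def leg_def)
  qed
  have "maj (replicate ?w ?h) \<rho> = (\<Sum>c\<in>{1..?w} \<times> {1..?h}. descent_weight (replicate ?w ?h) \<rho> c)"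
    by (simp only: maj_eq_sum_descent_weight dg_replicate)
  also have "\<dots> = (\<Sum>c\<in>{a..b} \<times> {1..?h}. descent_weight lam \<tau> c)"
    by (rule sum.reindex_bij_witness[of _ "\<lambda>(i, r). (i - a + 1, r)" "\<lambda>(j, r). (j + a - 1, r)"])
      (use ab cell in auto)
  finally show ?thesis ..
qed

lemma colh_antimono:
  assumes "partition lam" "1 \<le> i" "i \<le> j" "j \<le> length lam"
  shows "colh lam j \<le> colh lam i"
  using assms sorted_wrt_nth_less[of "(\<ge>)" lam "i - 1" "j - 1"]
  unfolding partition_def colh_def by (cases "i = j") auto

lemma cells_of_height_max_rect:
  assumes "partition lam" "h \<in> set lam"
  obtains a b where "max_rect lam a b" "{c \<in> dg lam. colh lam (fst c) = h} = {a..b} \<times> {1..colh lam a}"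
proof -
  define S where "S = {i. 1 \<le> i \<and> i \<le> length lam \<and> colh lam i = h}"
  have S_iff: "i \<in> S \<longleftrightarrow> 1 \<le> i \<and> i \<le> length lam \<and> colh lam i = h" for i
    by (simp add: S_def)
  obtain p where "p < length lam" "lam ! p = h"
    using assms(2) by (auto simp: in_set_conv_nth)
  then have "Suc p \<in> S" by (simp add: S_iff colh_def)
  moreover have "finite S" unfolding S_def by simp
  moreover define a b where "a = Min S" and "b = Max S"
  ultimately have a: "a \<in> S" "\<And>i. i \<in> S \<Longrightarrow> a \<le> i" and b: "b \<in> S" "\<And>i. i \<in> S \<Longrightarrow> i \<le> b"
    by (auto intro: Min_in Max_in)
  have between: "i \<in> S" if "a \<le> i" "i \<le> b" for i
  proof -
    have "colh lam b \<le> colh lam i" "colh lam i \<le> colh lam a"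
      using colh_antimono[OF assms(1), of i b] colh_antimono[OF assms(1), of a i] a(1) b(1) that
      by (auto simp: S_iff)
    then show ?thesis using a(1) b(1) that by (auto simp: S_iff)
  qed
  have S: "S = {a..b}"
  proof
    show "S \<subseteq> {a..b}" using a(2) b(2) by auto
    show "{a..b} \<subseteq> S" using between by auto
  qed
  have "max_rect lam a b"
    unfolding max_rect_def
  proof (intro conjI allI impI)
    show "1 \<le> a" "a \<le> b" "b \<le> length lam"
      using a b by (auto simp: S_iff)
    show "colh lam i = colh lam a" if "a \<le> i \<and> i \<le> b" for i
      using between[of i] that a(1) by (simp add: S_iff)
    show "a = 1 \<or> colh lam (a - 1) \<noteq> colh lam a"
    proof (rule ccontr)
      assume "\<not> (a = 1 \<or> colh lam (a - 1) \<noteq> colh lam a)"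
      with a(1) have "a \<noteq> 1" "a - 1 \<in> S" by (auto simp: S_iff)
      with a(1) a(2)[of "a - 1"] show False by (auto simp: S_iff)
    qed
    show "b = length lam \<or> colh lam (b + 1) \<noteq> colh lam a"
    proof (rule ccontr)
      assume "\<not> (b = length lam \<or> colh lam (b + 1) \<noteq> colh lam a)"
      with a(1) b(1) have "b + 1 \<in> S" by (auto simp: S_iff)
      then show False using b(2)[of "b + 1"] by simp
    qed
  qed
  moreover have "colh lam a = h"
    using a(1) by (simp add: S_iff)
  moreover have "{c \<in> dg lam. colh lam (fst c) = h} = S \<times> {1..h}"
    by (auto simp: dg_def S_iff)
  ultimately show ?thesis
    unfolding S by (metis that)
qed

lemma maj_eq_sum_heights:
  "maj lam \<tau> = (\<Sum>h\<in>set lam. \<Sum>c\<in>{c \<in> dg lam. colh lam (fst c) = h}. descent_weight lam \<tau> c)"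
proof -
  have "(\<lambda>c. colh lam (fst c)) ` dg lam \<subseteq> set lam"
    by (auto simp: dg_def colh_def)
  then show ?thesis
    unfolding maj_eq_sum_descent_weight by (intro sum.group[OF finite_dg, symmetric]) simp_all
qed

lemma sum_descent_weight_family_max_rect:
  assumes "max_rect lam a b" "\<tau> \<in> family lam \<sigma>"
  shows "(\<Sum>c\<in>{a..b} \<times> {1..colh lam a}. descent_weight lam \<tau> c) =
         (\<Sum>c\<in>{a..b} \<times> {1..colh lam a}. descent_weight lam \<sigma> c)"
proof -
  obtain \<rho> where \<rho>: "\<rho> \<in> rect_family (colh lam a) (b - a + 1) (shift_filling \<sigma> a)"
    "\<forall>i r. 1 \<le> i \<and> i \<le> b - a + 1 \<and> 1 \<le> r \<and> r \<le> colh lam a \<longrightarrow> \<tau> (i + a - 1, r) = \<rho> (i, r)"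
    using assms unfolding family_def by blast
  have shift: "\<forall>i r. 1 \<le> i \<and> i \<le> b - a + 1 \<and> 1 \<le> r \<and> r \<le> colh lam a \<longrightarrow>
      \<sigma> (i + a - 1, r) = shift_filling \<sigma> a (i, r)"
    by (simp add: shift_filling_def)
  have "(\<Sum>c\<in>{a..b} \<times> {1..colh lam a}. descent_weight lam \<tau> c) = maj (replicate (b - a + 1) (colh lam a)) \<rho>"
    by (rule sum_descent_weight_max_rect[OF assms(1) \<rho>(2)])
  also have "\<dots> = maj (replicate (b - a + 1) (colh lam a)) (shift_filling \<sigma> a)"
    by (rule maj_rect_family[OF \<rho>(1)])
  also have "\<dots> = (\<Sum>c\<in>{a..b} \<times> {1..colh lam a}. descent_weight lam \<sigma> c)"
    by (rule sum_descent_weight_max_rect[OF assms(1) shift, symmetric])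
  finally show ?thesis .
qed

theorem mainTheorem7:
  fixes lam :: "nat list" and \<sigma> \<tau> :: filling
  assumes "partition lam"
    and "is_filling lam \<sigma>"
    and "sorted_tableau lam \<sigma>"
    and "\<tau> \<in> family lam \<sigma>"
  shows "maj lam \<tau> = maj lam \<sigma>"
proof -
  have "(\<Sum>c\<in>{c \<in> dg lam. colh lam (fst c) = h}. descent_weight lam \<tau> c) =
        (\<Sum>c\<in>{c \<in> dg lam. colh lam (fst c) = h}. descent_weight lam \<sigma> c)" if h: "h \<in> set lam" for h
  proof -
    obtain a b where "max_rect lam a b" "{c \<in> dg lam. colh lam (fst c) = h} = {a..b} \<times> {1..colh lam a}"
      using cells_of_height_max_rect[OF assms(1) h] .
    with sum_descent_weight_family_max_rect[OF _ assms(4)] show ?thesis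
      by simp
  qed
  then show ?thesis
    unfolding maj_eq_sum_heights by (rule sum.cong[OF refl])
qed

end
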